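(* Let $\mu>0$, $\sigma\ge0$. Then the robust approximation ratio satisfies \[\mathrm{APX}(\mu,\sigma)\ \ge\ \sup_{(\Theta,F)\in\Delta_{\mu,\sigma}}\frac{\mathbb{E}_{\theta\sim\Theta}[\mathrm{OPT}(F_\theta)]}{\mathrm{OPT}\left(\mathbb{E}_{\theta\sim\Theta}[F_\theta]\right)}.\]
   Context: A nonnegative real random variable is $(\mu,\sigma)$-distributed if its expectation is $\mu$ and its standard deviation is at most $\sigma$; $\mathbb{F}_{\mu,\sigma}$ is the class of such distributions (identified with their cdfs). For a distribution $F$ of a nonnegative $X$ and price $p\ge 0$, $\mathrm{REV}(p;F)=p\Pr[X\ge p]$; for a distribution $A$ over prices, $\mathrm{REV}(A;F)=\mathbb{E}_{p\sim A}[\mathrm{REV}(p;F)]$; $\mathrm{OPT}(F)=\sup_{p\ge0}\mathrm{REV}(p;F)$; $\mathrm{APX}(\mu,\sigma)=\inf_A\sup_{F\in\mathbb{F}_{\mu,\sigma}}\mathrm{OPT}(F)/\mathrm{REV}(A;F)$, the infimum over all distributions $A$ over nonnegative prices (ratios with zero denominator are $+\infty$). A $(\mu,\sigma)$ mixture is a pair $(\Theta,F)$, where $\Theta$ is a probability measure on a measurable space $T$ and $F:\mathbb{R}_{\ge0}\times T\to\mathbb{R}$ is measurable such that each $F_\theta(x)=F(x;\theta)$ is the cdf of a distribution in $\mathbb{F}_{\mu,\sigma}$; $\Delta_{\mu,\sigma}$ is the class of all $(\mu,\sigma)$ mixtures. The posterior distribution $\mathbb{E}_{\theta\sim\Theta}[F_\theta]$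 is the distribution with cdf $z\mapsto\mathbb{E}_{\theta\sim\Theta}[F_\theta(z)]$. *)

theory Defs
  imports "HOL-Probability.Probability"
begin

definition nonneg_dist :: "real measure \<Rightarrow> bool" where
  "nonneg_dist M \<longleftrightarrow> real_distribution M \<and> (AE x in M. 0 \<le> x)"

definition Fclass :: "real \<Rightarrow> real \<Rightarrow> real measure set" where
  "Fclass \<mu> \<sigma> = {M. nonneg_dist M \<and> integrable M (\<lambda>x. x) \<and> integrable M (\<lambda>x. x ^ 2)
      \<and> (\<integral>x. x \<partial>M) = \<mu> \<and> sqrt (\<integral>x. (x - \<mu>) ^ 2 \<partial>M) \<le> \<sigma>}"

definition rev_price :: "real \<Rightarrow> real measure \<Rightarrow> real" where
  "rev_price p M = p * measure M {p..}"

definition rev_mixed :: "real measure \<Rightarrow> real measure \<Rightarrow> real" where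
  "rev_mixed A M = (\<integral>p. rev_price p M \<partial>A)"

definition opt_rev :: "real measure \<Rightarrow> real" where
  "opt_rev M = (SUP p\<in>{0..}. rev_price p M)"

definition ratio :: "real \<Rightarrow> real \<Rightarrow> ereal" where
  "ratio a b = (if b = 0 then \<infinity> else ereal (a / b))"

definition price_dist :: "real measure \<Rightarrow> bool" where
  "price_dist A \<longleftrightarrow> nonneg_dist A"

definition APX :: "real \<Rightarrow> real \<Rightarrow> ereal" where
  "APX \<mu> \<sigma> = (INF A\<in>{A. price_dist A}. SUP M\<in>Fclass \<mu> \<sigma>. ratio (opt_rev M) (rev_mixed A M))"

definition dist_of_cdf :: "(real \<Rightarrow> real) \<Rightarrow> real measure" where
  "dist_of_cdf G = (THE M. nonneg_dist M \<and> (\<forall>z\<ge>0. cdf M z = G z))"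

definition mixture :: "real \<Rightarrow> real \<Rightarrow> 'b measure \<Rightarrow> (real \<Rightarrow> 'b \<Rightarrow> real) \<Rightarrow> bool" where
  "mixture \<mu> \<sigma> \<Theta> F \<longleftrightarrow> prob_space \<Theta>
     \<and> (\<lambda>(x, \<theta>). F x \<theta>) \<in> borel_measurable (restrict_space borel {0..} \<Otimes>\<^sub>M \<Theta>)
     \<and> (\<forall>\<theta>\<in>space \<Theta>. \<exists>M\<in>Fclass \<mu> \<sigma>. \<forall>x\<ge>0. F x \<theta> = cdf M x)"

definition posterior :: "'b measure \<Rightarrow> (real \<Rightarrow> 'b \<Rightarrow> real) \<Rightarrow> real measure" where
  "posterior \<Theta> F = dist_of_cdf (\<lambda>z. \<integral>\<theta>. F z \<theta> \<partial>\<Theta>)"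

end

theory Submission
  imports Defs
begin

text \<open>Fix a price distribution A and let S be its worst-case ratio over the class. Every
  component then satisfies OPT(F_theta) \<le> S * REV(A; F_theta). Realising the posterior as the
  compound distribution of the kernel theta \<mapsto> F_theta, Fubini gives
  E[REV(A; F_theta)] = REV(A; posterior) \<le> OPT(posterior), so integrating the componentwise bound
  over theta bounds the ratio of the theorem by S for every A, hence by APX.\<close>

lemma rev_price_nonneg: "0 \<le> p \<Longrightarrow> 0 \<le> rev_price p M"
  by (simp add: rev_price_def)

lemma rev_price_le_expectation:
  assumes "nonneg_dist M" "integrable M (\<lambda>x. x)" "0 \<le> p"
  shows "rev_price p M \<le> (\<integral>x. x \<partial>M)"
proof -
  interpret real_distribution M using assms(1) by (simp add: nonneg_dist_def)
  have nonneg: "AE x in M. 0 \<le> x" using assms(1) by (simp add: nonneg_dist_def)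
  show ?thesis
  proof (cases "p = 0")
    case True
    then show ?thesis using nonneg by (simp add: rev_price_def integral_nonneg_AE)
  next
    case False
    then have "0 < p" using assms(3) by simp
    have "measure M {x\<in>space M. p \<le> x} \<le> (\<integral>x. x \<partial>M) / p"
      using nonneg by (intro integral_Markov_inequality_measure[OF assms(2) _ _ \<open>0 < p\<close>, of "{}"]) auto
    then show ?thesis using \<open>0 < p\<close> by (simp add: rev_price_def atLeast_def field_simps)
  qed
qed

lemma rev_price_le_opt_rev:
  assumes "\<And>q. 0 \<le> q \<Longrightarrow> rev_price q M \<le> B" "0 \<le> p"
  shows "rev_price p M \<le> opt_rev M"
  unfolding opt_rev_def using assms by (intro cSUP_upper bdd_aboveI2) auto

lemma opt_rev_nonneg:
  assumes "\<And>q. 0 \<le> q \<Longrightarrow> rev_price q M \<le> B"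
  shows "0 \<le> opt_rev M"
  using rev_price_le_opt_rev[OF assms, of 0] by (simp add: rev_price_def)

lemma rev_mixed_nonneg:
  assumes "nonneg_dist A"
  shows "0 \<le> rev_mixed A M"
  using assms unfolding rev_mixed_def nonneg_dist_def
  by (auto intro!: integral_nonneg_AE elim!: eventually_mono simp: rev_price_nonneg)

lemma rev_mixed_le_opt_rev:
  assumes "nonneg_dist A" "\<And>q. 0 \<le> q \<Longrightarrow> rev_price q M \<le> B"
  shows "rev_mixed A M \<le> opt_rev M"
proof -
  interpret prob_space A using assms(1) by (simp add: nonneg_dist_def real_distribution_def)
  have "AE p in A. rev_price p M \<le> opt_rev M"
    using assms by (auto simp: nonneg_dist_def intro: rev_price_le_opt_rev elim!: eventually_mono)
  then have "rev_mixed A M \<le> (\<integral>p. opt_rev M \<partial>A)"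
    unfolding rev_mixed_def using opt_rev_nonneg[OF assms(2)] by (intro integral_mono_AE') auto
  then show ?thesis by (simp add: prob_space)
qed

lemma borel_measurable_rev_price:
  assumes "real_distribution M"
  shows "(\<lambda>p. rev_price p M) \<in> borel_measurable borel"
proof -
  interpret real_distribution M by (fact assms)
  have "mono (\<lambda>p. - measure M {p..})" by (auto intro!: monoI finite_measure_mono)
  then have "(\<lambda>p. - measure M {p..}) \<in> borel_measurable borel" by (rule borel_measurable_mono)
  then have "(\<lambda>p. p * - (- measure M {p..})) \<in> borel_measurable borel" by measurable
  then show ?thesis by (simp add: rev_price_def)
qed

lemma rev_mixed_max_0:
  assumes "nonneg_dist A" "real_distribution M"
  shows "rev_mixed A M = (\<integral>p. rev_price (max 0 p) M \<partial>A)"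
  unfolding rev_mixed_def
proof (rule integral_cong_AE)
  interpret real_distribution A using assms(1) by (simp add: nonneg_dist_def)
  show "(\<lambda>p. rev_price p M) \<in> borel_measurable A" "(\<lambda>p. rev_price (max 0 p) M) \<in> borel_measurable A"
    using borel_measurable_rev_price[OF assms(2)] by (simp_all cong: measurable_cong_sets)
  show "AE p in A. rev_price p M = rev_price (max 0 p) M"
    using assms(1) by (auto simp: nonneg_dist_def elim!: eventually_mono)
qed

lemma nonneg_dist_cdf_neg:
  assumes "nonneg_dist M" "x < 0"
  shows "cdf M x = 0"
proof -
  interpret real_distribution M using assms(1) by (simp add: nonneg_dist_def)
  have "AE y in M. y \<notin> {..x}"
    using assms by (auto simp: nonneg_dist_def elim!: eventually_mono)
  then have "emeasure M {..x} = 0" by (intro AE_iff_measurable[THEN iffD1]) auto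
  then show ?thesis by (simp add: cdf_def measure_def)
qed

lemma dist_of_cdf_eq:
  assumes "nonneg_dist M" "\<And>z. 0 \<le> z \<Longrightarrow> cdf M z = G z"
  shows "dist_of_cdf G = M"
  unfolding dist_of_cdf_def
proof (rule the_equality)
  show "nonneg_dist M \<and> (\<forall>z\<ge>0. cdf M z = G z)" using assms by auto
next
  fix M' assume M': "nonneg_dist M' \<and> (\<forall>z\<ge>0. cdf M' z = G z)"
  have "cdf M' z = cdf M z" for z
    using M' assms nonneg_dist_cdf_neg[of M' z] nonneg_dist_cdf_neg[of M z] by (cases "z < 0") auto
  then show "M' = M" using M' assms(1) by (intro cdf_unique) (auto simp: nonneg_dist_def)
qed

lemma measurable_prob_algebra_cdf:
  assumes "\<And>\<theta>. \<theta> \<in> space \<Theta> \<Longrightarrow> real_distribution (K \<theta>)"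
    and "\<And>x. (\<lambda>\<theta>. cdf (K \<theta>) x) \<in> borel_measurable \<Theta>"
  shows "K \<in> \<Theta> \<rightarrow>\<^sub>M prob_algebra borel"
proof (rule measurable_prob_algebra_generated[where \<Omega>=UNIV and G="range atMost"])
  have "sets (borel::real measure) = sets (sigma UNIV (range atMost))"
    by (rule arg_cong[where f=sets, OF borel_eq_atMost])
  then show "sets borel = sigma_sets UNIV (range (atMost::real \<Rightarrow> _))" by simp
  show "Int_stable (range (atMost :: real \<Rightarrow> _))"
    unfolding Int_stable_def by (auto intro: rangeI)
  show "prob_space (K \<theta>)" "sets (K \<theta>) = sets borel" if "\<theta> \<in> space \<Theta>" for \<theta>
    using assms(1)[OF that] by (simp_all add: real_distribution_def real_distribution_axioms_def)
  fix X :: "real set" assume "X \<in> range atMost"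
  then obtain x where X: "X = {..x}" by auto
  have "(\<lambda>\<theta>. ennreal (cdf (K \<theta>) x)) \<in> borel_measurable \<Theta>" using assms(2) by simp
  then show "(\<lambda>\<theta>. emeasure (K \<theta>) X) \<in> borel_measurable \<Theta>"
  proof (rule measurable_cong[THEN iffD1, rotated])
    fix \<theta> assume "\<theta> \<in> space \<Theta>"
    then interpret real_distribution "K \<theta>" by (rule assms(1))
    show "ennreal (cdf (K \<theta>) x) = emeasure (K \<theta>) X" by (simp add: X emeasure_eq_measure cdf_def)
  qed
qed simp

lemma real_distribution_kernel:
  assumes "K \<in> \<Theta> \<rightarrow>\<^sub>M prob_algebra borel" "\<theta> \<in> space \<Theta>"
  shows "real_distribution (K \<theta>)"
  using measurable_space[OF assms]
  by (simp add: space_prob_algebra real_distribution_def real_distribution_axioms_def)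

lemma real_distribution_bind:
  assumes "prob_space \<Theta>" "K \<in> \<Theta> \<rightarrow>\<^sub>M prob_algebra borel"
  shows "real_distribution (\<Theta> \<bind> K)"
proof -
  have \<Theta>: "\<Theta> \<in> space (prob_algebra \<Theta>)" using assms(1) by (simp add: space_prob_algebra)
  show ?thesis
    using prob_space_bind'[OF \<Theta> assms(2)] sets_bind'[OF \<Theta> assms(2)]
    by (simp add: real_distribution_def real_distribution_axioms_def)
qed

lemma nonneg_dist_bind:
  assumes "prob_space \<Theta>" "K \<in> \<Theta> \<rightarrow>\<^sub>M prob_algebra borel"
    and "\<And>\<theta>. \<theta> \<in> space \<Theta> \<Longrightarrow> nonneg_dist (K \<theta>)"
  shows "nonneg_dist (\<Theta> \<bind> K)"
proof -
  have "AE y in \<Theta> \<bind> K. 0 \<le> y"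
    using assms(2,3) by (subst AE_bind[where B=borel])
      (auto simp: nonneg_dist_def measurable_prob_algebraD)
  then show ?thesis using real_distribution_bind[OF assms(1,2)] by (simp add: nonneg_dist_def)
qed

lemma cdf_bind:
  assumes "prob_space \<Theta>" "K \<in> \<Theta> \<rightarrow>\<^sub>M subprob_algebra borel"
  shows "cdf (\<Theta> \<bind> K) x = (\<integral>\<theta>. cdf (K \<theta>) x \<partial>\<Theta>)"
proof -
  interpret prob_space \<Theta> by (fact assms(1))
  show ?thesis using measure_bind[OF assms(2)] by (simp add: cdf_def)
qed

lemma rev_price_bind:
  assumes "prob_space \<Theta>" "K \<in> \<Theta> \<rightarrow>\<^sub>M subprob_algebra borel"
  shows "rev_price p (\<Theta> \<bind> K) = (\<integral>\<theta>. rev_price p (K \<theta>) \<partial>\<Theta>)"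
proof -
  interpret prob_space \<Theta> by (fact assms(1))
  show ?thesis using measure_bind[OF assms(2)] by (simp add: rev_price_def)
qed

lemma rev_price_bind_le:
  assumes "prob_space \<Theta>" "K \<in> \<Theta> \<rightarrow>\<^sub>M subprob_algebra borel"
    and "\<And>\<theta>. \<theta> \<in> space \<Theta> \<Longrightarrow> rev_price p (K \<theta>) \<le> B" "0 \<le> p"
  shows "rev_price p (\<Theta> \<bind> K) \<le> B"
proof -
  interpret prob_space \<Theta> by (fact assms(1))
  obtain \<theta> where "\<theta> \<in> space \<Theta>" using not_empty by blast
  then have "0 \<le> B" using assms(3,4) rev_price_nonneg order.trans by blast
  then have "(\<integral>\<theta>. rev_price p (K \<theta>) \<partial>\<Theta>) \<le> (\<integral>\<theta>. B \<partial>\<Theta>)"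
    using assms(3) by (intro integral_mono_AE') auto
  then show ?thesis by (simp add: rev_price_bind[OF assms(1,2)] prob_space)
qed

lemma measurable_measure_atLeast_kernel:
  fixes K :: "'b \<Rightarrow> real measure"
  assumes "K \<in> \<Theta> \<rightarrow>\<^sub>M subprob_algebra borel"
  shows "(\<lambda>x. measure (K (snd x)) {fst x..}) \<in> borel_measurable (borel \<Otimes>\<^sub>M \<Theta>)"
proof -
  have "{y \<in> space ((borel \<Otimes>\<^sub>M \<Theta>) \<Otimes>\<^sub>M borel). fst (fst y) \<le> (snd y :: real)}
      \<in> sets ((borel \<Otimes>\<^sub>M \<Theta>) \<Otimes>\<^sub>M borel)"
    by measurable
  moreover have "(SIGMA x:space ((borel :: real measure) \<Otimes>\<^sub>M \<Theta>). {fst x..})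
      = {y \<in> space ((borel \<Otimes>\<^sub>M \<Theta>) \<Otimes>\<^sub>M borel). fst (fst y) \<le> snd y}"
    by (auto simp: space_pair_measure)
  ultimately have sets: "(SIGMA x:space ((borel :: real measure) \<Otimes>\<^sub>M \<Theta>). {fst x..})
      \<in> sets ((borel \<Otimes>\<^sub>M \<Theta>) \<Otimes>\<^sub>M borel)"
    by (simp only:)
  have kernel: "(\<lambda>x. K (snd x)) \<in> (borel :: real measure) \<Otimes>\<^sub>M \<Theta> \<rightarrow>\<^sub>M subprob_algebra borel"
    using assms by measurable
  show ?thesis by (rule measure_measurable_subprob_algebra2[OF sets kernel])
qed

lemma integrable_rev_price_max_0_kernel:
  assumes "real_distribution A" "prob_space \<Theta>" "K \<in> \<Theta> \<rightarrow>\<^sub>M subprob_algebra borel"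
    and bound: "\<And>\<theta> p. \<theta> \<in> space \<Theta> \<Longrightarrow> 0 \<le> p \<Longrightarrow> rev_price p (K \<theta>) \<le> B"
  shows "integrable (A \<Otimes>\<^sub>M \<Theta>) (\<lambda>(p, \<theta>). rev_price (max 0 p) (K \<theta>))"
proof -
  interpret A: real_distribution A by (fact assms(1))
  interpret \<Theta>: prob_space \<Theta> by (fact assms(2))
  interpret pair_prob_space A \<Theta> by unfold_locales
  have "(\<lambda>x. (max 0 (fst x), snd x)) \<in> (borel :: real measure) \<Otimes>\<^sub>M \<Theta> \<rightarrow>\<^sub>M borel \<Otimes>\<^sub>M \<Theta>"
    by measurable
  from measurable_compose[OF this measurable_measure_atLeast_kernel[OF assms(3)]]
  have [measurable]: "(\<lambda>x. measure (K (snd x)) {max 0 (fst x)..}) \<in> borel_measurable (borel \<Otimes>\<^sub>M \<Theta>)"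
    by simp
  have "(\<lambda>x. max 0 (fst x) * measure (K (snd x)) {max 0 (fst x)..}) \<in> borel_measurable (borel \<Otimes>\<^sub>M \<Theta>)"
    by measurable
  moreover have "sets (A \<Otimes>\<^sub>M \<Theta>) = sets (borel \<Otimes>\<^sub>M \<Theta>)"
    by (intro sets_pair_measure_cong) simp_all
  ultimately have "(\<lambda>(p, \<theta>). rev_price (max 0 p) (K \<theta>)) \<in> borel_measurable (A \<Otimes>\<^sub>M \<Theta>)"
    by (simp add: rev_price_def case_prod_beta' cong: measurable_cong_sets)
  moreover have "AE x in A \<Otimes>\<^sub>M \<Theta>. norm (case_prod (\<lambda>p \<theta>. rev_price (max 0 p) (K \<theta>)) x) \<le> B"
    using bound by (intro AE_I2) (auto simp: space_pair_measure rev_price_nonneg)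
  ultimately show ?thesis by (intro integrable_const_bound)
qed

lemma rev_mixed_bind:
  assumes "prob_space \<Theta>" "K \<in> \<Theta> \<rightarrow>\<^sub>M prob_algebra borel" "nonneg_dist A"
    and "\<And>\<theta> p. \<theta> \<in> space \<Theta> \<Longrightarrow> 0 \<le> p \<Longrightarrow> rev_price p (K \<theta>) \<le> B"
  shows "integrable \<Theta> (\<lambda>\<theta>. rev_mixed A (K \<theta>))"
    and "rev_mixed A (\<Theta> \<bind> K) = (\<integral>\<theta>. rev_mixed A (K \<theta>) \<partial>\<Theta>)"
proof -
  interpret \<Theta>: prob_space \<Theta> by (fact assms(1))
  interpret A: real_distribution A using assms(3) by (simp add: nonneg_dist_def)
  interpret pair_prob_space A \<Theta> by unfold_locales
  have K_sub: "K \<in> \<Theta> \<rightarrow>\<^sub>M subprob_algebra borel"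
    using assms(2) by (simp add: measurable_prob_algebraD)
  define g where "g p \<theta> = rev_price (max 0 p) (K \<theta>)" for p \<theta>
  \<comment> \<open>Truncating the price at 0 makes the integrand bounded on the whole product space.\<close>
  have g_int: "integrable (A \<Otimes>\<^sub>M \<Theta>) (case_prod g)"
    unfolding g_def by (rule integrable_rev_price_max_0_kernel[OF A.real_distribution_axioms assms(1) K_sub assms(4)])
  have sections: "rev_mixed A (K \<theta>) = (\<integral>p. g p \<theta> \<partial>A)" if "\<theta> \<in> space \<Theta>" for \<theta>
    using rev_mixed_max_0[OF assms(3) real_distribution_kernel[OF assms(2) that]] by (simp add: g_def)
  have "integrable \<Theta> (\<lambda>\<theta>. rev_mixed A (K \<theta>)) \<longleftrightarrow> integrable \<Theta> (\<lambda>\<theta>. \<integral>p. g p \<theta> \<partial>A)"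
    by (intro Bochner_Integration.integrable_cong) (simp_all add: sections)
  then show "integrable \<Theta> (\<lambda>\<theta>. rev_mixed A (K \<theta>))" using integrable_snd[OF g_int] by simp
  have "rev_mixed A (\<Theta> \<bind> K) = (\<integral>p. (\<integral>\<theta>. g p \<theta> \<partial>\<Theta>) \<partial>A)"
    using rev_mixed_max_0[OF assms(3) real_distribution_bind[OF assms(1,2)]]
    by (simp add: rev_price_bind[OF assms(1) K_sub] g_def)
  also have "\<dots> = (\<integral>\<theta>. (\<integral>p. g p \<theta> \<partial>A) \<partial>\<Theta>)" by (rule Fubini_integral[OF g_int, symmetric])
  also have "\<dots> = (\<integral>\<theta>. rev_mixed A (K \<theta>) \<partial>\<Theta>)"
    by (intro Bochner_Integration.integral_cong) (simp_all add: sections)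
  finally show "rev_mixed A (\<Theta> \<bind> K) = (\<integral>\<theta>. rev_mixed A (K \<theta>) \<partial>\<Theta>)" .
qed

lemma integral_ratio_le:
  fixes a b :: "'a \<Rightarrow> real"
  assumes "space \<Theta> \<noteq> {}"
    and ratio_le: "\<And>\<theta>. \<theta> \<in> space \<Theta> \<Longrightarrow> ratio (a \<theta>) (b \<theta>) \<le> S"
    and a_nonneg: "\<And>\<theta>. \<theta> \<in> space \<Theta> \<Longrightarrow> 0 \<le> a \<theta>"
    and b_nonneg: "\<And>\<theta>. \<theta> \<in> space \<Theta> \<Longrightarrow> 0 \<le> b \<theta>"
    and "integrable \<Theta> b" "(\<integral>\<theta>. b \<theta> \<partial>\<Theta>) \<le> c"
  shows "ereal ((\<integral>\<theta>. a \<theta> \<partial>\<Theta>) / c) \<le> S"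
proof -
  obtain \<theta>\<^sub>0 where "\<theta>\<^sub>0 \<in> space \<Theta>" using assms(1) by blast
  then have "0 \<le> S"
    using ratio_le a_nonneg b_nonneg by (force simp: ratio_def intro: order.trans[rotated])
  have "0 \<le> (\<integral>\<theta>. b \<theta> \<partial>\<Theta>)" using b_nonneg by (intro integral_nonneg_AE AE_I2)
  then have "0 \<le> c" using assms(6) by linarith
  show ?thesis
  proof (cases S)
    case (real s)
    have a_le: "a \<theta> \<le> s * b \<theta>" if "\<theta> \<in> space \<Theta>" for \<theta>
    proof -
      have "ratio (a \<theta>) (b \<theta>) \<le> ereal s" using ratio_le[OF that] real by simp
      moreover have "0 \<le> b \<theta>" using b_nonneg[OF that] .
      ultimately show ?thesis by (auto simp: ratio_def divide_le_eq mult.commute split: if_splits)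
    qed
    have "(\<integral>\<theta>. a \<theta> \<partial>\<Theta>) \<le> (\<integral>\<theta>. s * b \<theta> \<partial>\<Theta>)"
      using a_le \<open>0 \<le> S\<close> real b_nonneg assms(5) by (intro integral_mono_AE') (auto intro!: AE_I2)
    also have "\<dots> \<le> s * c" using \<open>0 \<le> S\<close> real assms(6) by (simp add: mult_left_mono)
    finally show ?thesis
      using \<open>0 \<le> S\<close> \<open>0 \<le> c\<close> real by (cases "c = 0") (simp_all add: divide_le_eq mult.commute)
  qed (use \<open>0 \<le> S\<close> in simp_all)
qed

lemma mixture_component:
  assumes "mixture \<mu> \<sigma> \<Theta> F" "\<theta> \<in> space \<Theta>"
  shows "dist_of_cdf (\<lambda>z. F z \<theta>) \<in> Fclass \<mu> \<sigma>"
    and "\<And>x. 0 \<le> x \<Longrightarrow> cdf (dist_of_cdf (\<lambda>z. F z \<theta>)) x = F x \<theta>"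
proof -
  obtain M where M: "M \<in> Fclass \<mu> \<sigma>" "\<And>x. 0 \<le> x \<Longrightarrow> F x \<theta> = cdf M x"
    using assms unfolding mixture_def by blast
  have "dist_of_cdf (\<lambda>z. F z \<theta>) = M"
    using M by (intro dist_of_cdf_eq) (auto simp: Fclass_def)
  then show "dist_of_cdf (\<lambda>z. F z \<theta>) \<in> Fclass \<mu> \<sigma>"
    and "\<And>x. 0 \<le> x \<Longrightarrow> cdf (dist_of_cdf (\<lambda>z. F z \<theta>)) x = F x \<theta>"
    using M by simp_all
qed

lemma mixture_kernel_measurable:
  assumes "mixture \<mu> \<sigma> \<Theta> F"
  shows "(\<lambda>\<theta>. dist_of_cdf (\<lambda>z. F z \<theta>)) \<in> \<Theta> \<rightarrow>\<^sub>M prob_algebra borel"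
proof (rule measurable_prob_algebra_cdf)
  fix x :: real
  have F_meas: "(\<lambda>(x, \<theta>). F x \<theta>) \<in> borel_measurable (restrict_space borel {0..} \<Otimes>\<^sub>M \<Theta>)"
    using assms by (simp add: mixture_def)
  have F_section: "(\<lambda>\<theta>. F x \<theta>) \<in> borel_measurable \<Theta>" if "0 \<le> x"
  proof -
    have "(\<lambda>\<theta>. (x, \<theta>)) \<in> \<Theta> \<rightarrow>\<^sub>M restrict_space borel {0..} \<Otimes>\<^sub>M \<Theta>"
      using that by (intro measurable_Pair measurable_const) (auto simp: space_restrict_space)
    from measurable_compose[OF this F_meas] show ?thesis by simp
  qed
  have "cdf (dist_of_cdf (\<lambda>z. F z \<theta>)) x = (if 0 \<le> x then F x \<theta> else 0)" if "\<theta> \<in> space \<Theta>" for \<theta>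
    using mixture_component[OF assms that] nonneg_dist_cdf_neg
    by (auto simp: Fclass_def)
  then show "(\<lambda>\<theta>. cdf (dist_of_cdf (\<lambda>z. F z \<theta>)) x) \<in> borel_measurable \<Theta>"
    using F_section by (cases "0 \<le> x") (simp_all cong: measurable_cong)
next
  show "real_distribution (dist_of_cdf (\<lambda>z. F z \<theta>))" if "\<theta> \<in> space \<Theta>" for \<theta>
    using mixture_component(1)[OF assms that] by (simp add: Fclass_def nonneg_dist_def)
qed

lemma posterior_eq_bind:
  assumes "mixture \<mu> \<sigma> \<Theta> F"
  shows "posterior \<Theta> F = \<Theta> \<bind> (\<lambda>\<theta>. dist_of_cdf (\<lambda>z. F z \<theta>))"
  unfolding posterior_def
proof (rule dist_of_cdf_eq)
  have \<Theta>: "prob_space \<Theta>" using assms by (simp add: mixture_def)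
  note K = mixture_kernel_measurable[OF assms]
  show "nonneg_dist (\<Theta> \<bind> (\<lambda>\<theta>. dist_of_cdf (\<lambda>z. F z \<theta>)))"
    using mixture_component(1)[OF assms] by (intro nonneg_dist_bind[OF \<Theta> K]) (simp add: Fclass_def)
  fix z :: real assume "0 \<le> z"
  then show "cdf (\<Theta> \<bind> (\<lambda>\<theta>. dist_of_cdf (\<lambda>z. F z \<theta>))) z = (\<integral>\<theta>. F z \<theta> \<partial>\<Theta>)"
    using mixture_component(2)[OF assms] K
    by (simp add: cdf_bind[OF \<Theta>] measurable_prob_algebraD cong: Bochner_Integration.integral_cong)
qed

theorem lemma4:
  fixes \<mu> \<sigma> :: real and \<Theta> :: "'b measure" and F :: "real \<Rightarrow> 'b \<Rightarrow> real"
  assumes "\<mu> > 0" and "\<sigma> \<ge> 0" and "mixture \<mu> \<sigma> \<Theta> F"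
  shows "ereal ((\<integral>\<theta>. opt_rev (dist_of_cdf (\<lambda>z. F z \<theta>)) \<partial>\<Theta>) / opt_rev (posterior \<Theta> F))
           \<le> APX \<mu> \<sigma>"
proof -
  define K where "K = (\<lambda>\<theta>. dist_of_cdf (\<lambda>z. F z \<theta>))"
  have \<Theta>: "prob_space \<Theta>" using assms(3) by (simp add: mixture_def)
  have K_meas: "K \<in> \<Theta> \<rightarrow>\<^sub>M prob_algebra borel"
    unfolding K_def by (rule mixture_kernel_measurable[OF assms(3)])
  have K_Fclass: "K \<theta> \<in> Fclass \<mu> \<sigma>" if "\<theta> \<in> space \<Theta>" for \<theta>
    unfolding K_def by (rule mixture_component(1)[OF assms(3) that])
  have K_bound: "rev_price p (K \<theta>) \<le> \<mu>" if "\<theta> \<in> space \<Theta>" "0 \<le> p" for \<theta> p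
    using K_Fclass[OF that(1)] rev_price_le_expectation[OF _ _ that(2)] by (auto simp: Fclass_def)
  have N_bound: "rev_price p (\<Theta> \<bind> K) \<le> \<mu>" if "0 \<le> p" for p
    using K_meas K_bound that by (intro rev_price_bind_le[OF \<Theta>]) (auto simp: measurable_prob_algebraD)
  have "ereal ((\<integral>\<theta>. opt_rev (K \<theta>) \<partial>\<Theta>) / opt_rev (\<Theta> \<bind> K)) \<le> APX \<mu> \<sigma>"
    unfolding APX_def
  proof (rule INF_greatest)
    fix A assume "A \<in> {A. price_dist A}"
    then have A: "nonneg_dist A" by (simp add: price_dist_def)
    have "(\<integral>\<theta>. rev_mixed A (K \<theta>) \<partial>\<Theta>) \<le> opt_rev (\<Theta> \<bind> K)"
      using rev_mixed_le_opt_rev[OF A N_bound] by (simp add: rev_mixed_bind(2)[OF \<Theta> K_meas A K_bound])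
    then show "ereal ((\<integral>\<theta>. opt_rev (K \<theta>) \<partial>\<Theta>) / opt_rev (\<Theta> \<bind> K))
        \<le> (SUP M\<in>Fclass \<mu> \<sigma>. ratio (opt_rev M) (rev_mixed A M))"
      using K_Fclass K_bound prob_space.not_empty[OF \<Theta>] rev_mixed_bind(1)[OF \<Theta> K_meas A K_bound]
      by (intro integral_ratio_le[where b="\<lambda>\<theta>. rev_mixed A (K \<theta>)"] SUP_upper opt_rev_nonneg
          rev_mixed_nonneg[OF A]) auto
  qed
  then show ?thesis using posterior_eq_bind[OF assms(3)] by (simp add: K_def)
qed

end
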